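(* Let $\star$ be a $t$-definer. For every $r>0$ there exists $r_1>0$ such that $a\star b<r$ for all $a,b\in[0,r_1)$, i.e. $[0,r_1)\star[0,r_1)\subseteq[0,r)$.
   Context: A $t$-definer is a function $\star:[0,\infty)\times[0,\infty)\to[0,\infty)$ such that for all $a,b,c\ge 0$: $a\star b=b\star a$; $a\star(b\star c)=(a\star b)\star c$; if $a\le b$ then $a\star c\le b\star c$; $a\star 0=a$; and $\star$ is continuous in its first variable with respect to the Euclidean topology. *)

theory Defs
  imports "HOL-Analysis.Analysis"
begin

text \<open>A t-definer: an operation on [0,oo) (modelled as a real function whose
  behaviour outside [0,oo) is irrelevant).\<close>
definition t_definer :: "(real \<Rightarrow> real \<Rightarrow> real) \<Rightarrow> bool" where
  "t_definer f \<longleftrightarrow>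
     (\<forall>a\<ge>0. \<forall>b\<ge>0. f a b \<ge> 0) \<and>
     (\<forall>a\<ge>0. \<forall>b\<ge>0. f a b = f b a) \<and>
     (\<forall>a\<ge>0. \<forall>b\<ge>0. \<forall>c\<ge>0. f a (f b c) = f (f a b) c) \<and>
     (\<forall>a\<ge>0. \<forall>b\<ge>0. \<forall>c\<ge>0. a \<le> b \<longrightarrow> f a c \<le> f b c) \<and>
     (\<forall>a\<ge>0. f a 0 = a) \<and>
     (\<forall>c\<ge>0. continuous_on {0..} (\<lambda>a. f a c))"

end

theory Submission
  imports Defs
begin

text \<open>Fix \<open>c = r/2\<close>. By continuity of \<open>a \<mapsto> a \<star> c\<close> at \<open>0\<close>, where its value is
  \<open>0 \<star> c = c\<close>, we get \<open>a \<star> c < 2c = r\<close> for small \<open>a\<close>; monotonicity then gives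
  \<open>a \<star> b \<le> a \<star> c < r\<close> for all \<open>b \<le> c\<close>.\<close>

lemma t_definer_mono_right:
  assumes "t_definer f" "0 \<le> a" "0 \<le> b" "b \<le> c"
  shows "f a b \<le> f a c"
proof -
  have "f b a \<le> f c a"
    using assms unfolding t_definer_def by auto
  moreover have "f a b = f b a" "f a c = f c a"
    using assms unfolding t_definer_def by auto
  ultimately show ?thesis by simp
qed

lemma t_definer_zero_left:
  assumes "t_definer f" "0 \<le> c"
  shows "f 0 c = c"
  using assms unfolding t_definer_def by (metis order_refl)

lemma t_definer_small_left_bound:
  assumes "t_definer f" "0 \<le> c" "e > 0"
  obtains d where "d > 0" "\<And>a. 0 \<le> a \<Longrightarrow> a < d \<Longrightarrow> f a c < c + e"
proof -
  have "continuous_on {0..} (\<lambda>a. f a c)"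
    using assms unfolding t_definer_def by simp
  then obtain d where "d > 0"
      and d: "\<forall>a\<in>{0..}. dist a 0 < d \<longrightarrow> dist (f a c) (f 0 c) < e"
    using \<open>e > 0\<close> unfolding continuous_on_iff by (meson atLeast_iff order_refl)
  have "f a c < c + e" if "0 \<le> a" "a < d" for a
    using d that t_definer_zero_left[OF assms(1,2)] by (auto simp: dist_real_def)
  with \<open>d > 0\<close> show ?thesis using that by blast
qed

theorem lemma2p3:
  fixes f :: "real \<Rightarrow> real \<Rightarrow> real"
  assumes "t_definer f"
    and "r > 0"
  shows "\<exists>r1>0. \<forall>a b. 0 \<le> a \<and> a < r1 \<and> 0 \<le> b \<and> b < r1 \<longrightarrow> f a b < r"
proof -
  obtain d where "d > 0" and d: "\<And>a. 0 \<le> a \<Longrightarrow> a < d \<Longrightarrow> f a (r/2) < r/2 + r/2"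
    using t_definer_small_left_bound[OF assms(1), of "r/2" "r/2"] assms(2) by auto
  show ?thesis
  proof (intro exI[of _ "min d (r/2)"] conjI allI impI)
    show "min d (r/2) > 0" using \<open>d > 0\<close> assms(2) by simp
    fix a b assume ab: "0 \<le> a \<and> a < min d (r/2) \<and> 0 \<le> b \<and> b < min d (r/2)"
    then have "f a b \<le> f a (r/2)"
      using t_definer_mono_right[OF assms(1)] by simp
    also have "\<dots> < r"
      using d ab by simp
    finally show "f a b < r" .
  qed
qed

end
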